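(* Let $\lambda$ be a nonzero real number, $x$ a real number with $|\lambda x|<1$, and $p\ge2$ an integer. Then \[ \mathrm{Bel}_{p,\lambda}(x)=\frac{x\,e_{\lambda}^{-1}(x)}{1+\lambda x}\,e_{\lambda}(x,\ 1|1-p)-\frac{\lambda x}{1+\lambda x}\sum_{l=0}^{p-2}\binom{p-1}{l}\mathrm{Bel}_{l+1,\lambda}(x). \]
   Context: For nonzero real $\lambda$: $(1)_{0,\lambda}=1$, $(1)_{n,\lambda}=1(1-\lambda)\cdots(1-(n-1)\lambda)$ for $n\ge1$; $e_\lambda(x)=(1+\lambda x)^{1/\lambda}$ and $e_\lambda^{-1}(x)=(1+\lambda x)^{-1/\lambda}$. For an integer $q\ge1$, $e_{\lambda}(x,\ 1|-q)=\sum_{n=0}^{\infty}\frac{(1)_{n,\lambda}}{n!}(n+1)^{q}x^{n}$. The new type degenerate Bell polynomials $\mathrm{Bel}_{n,\lambda}(x)$ are defined by $e_{\lambda}(xe^{t})\,e_{\lambda}^{-1}(x)=\big(\frac{1+\lambda xe^t}{1+\lambda x}\big)^{1/\lambda}=\sum_{n=0}^{\infty}\mathrm{Bel}_{n,\lambda}(x)\frac{t^{n}}{n!}$. *)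

theory Defs
  imports "HOL-Analysis.Analysis"
begin

definition dfact :: "real \<Rightarrow> nat \<Rightarrow> real" where
  "dfact lam n = (\<Prod>k<n. 1 - real k * lam)"

definition dexp :: "real \<Rightarrow> real \<Rightarrow> real" where
  "dexp lam x = (1 + lam * x) powr (1 / lam)"

definition dexp_inv :: "real \<Rightarrow> real \<Rightarrow> real" where
  "dexp_inv lam x = (1 + lam * x) powr (- 1 / lam)"

text \<open>e_lambda(x, 1 | -q) = sum_n (1)_{n,lambda}/n! (n+1)^q x^n.\<close>
definition dexp_poly :: "real \<Rightarrow> nat \<Rightarrow> real \<Rightarrow> real" where
  "dexp_poly lam q x = (\<Sum>n. dfact lam n / fact n * (real n + 1) ^ q * x ^ n)"

text \<open>Generating function of the new type degenerate Bell polynomials: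
  e_lambda(x e^t) e_lambda^{-1}(x) = ((1 + lambda x e^t)/(1 + lambda x))^(1/lambda).\<close>
definition bel_gf :: "real \<Rightarrow> real \<Rightarrow> real \<Rightarrow> real" where
  "bel_gf lam x t = ((1 + lam * x * exp t) / (1 + lam * x)) powr (1 / lam)"

text \<open>Bel_{n,lambda}(x) is n! times the n-th Taylor coefficient at t = 0,
  i.e. the n-th derivative in t at 0.\<close>
definition Bel :: "nat \<Rightarrow> real \<Rightarrow> real \<Rightarrow> real" where
  "Bel n lam x = (deriv ^^ n) (bel_gf lam x) 0"

end

theory Submission
  imports Defs "HOL-Real_Asymp.Real_Asymp"
begin

text \<open>
  For |lambda z| < 1 the degenerate exponential is e_lambda(z) = sum_k (1)_{k,lambda} z^k / k!,
  so the generating function equals e_lambda^{-1}(x) sum_k (1)_{k,lambda} x^k / k! e^{kt}.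
  Differentiating termwise gives the Dobinski-type formula Bel_{n,lambda}(x) = e_lambda^{-1}(x) S_n
  with S_n = sum_k (1)_{k,lambda} x^k / k! k^n.  Expanding (k+1)^q binomially and using
  (1)_{k+1,lambda} = (1)_{k,lambda} (1 - k lambda) gives
  x e_lambda(x, 1|-q) = S_{q+1} + lambda x sum_{l<=q} binom(q,l) S_{l+1};
  for q = p - 1, separating the term l = q and solving for S_p yields the theorem.
\<close>

lemma dfact_Suc: "dfact lam (Suc k) = dfact lam k * (1 - real k * lam)"
  by (simp add: dfact_def)

lemma dfact_eq_gbinomial:
  assumes "lam \<noteq> 0"
  shows "dfact lam k = fact k * lam ^ k * (1 / lam gchoose k)"
proof -
  have "lam ^ k * (\<Prod>i<k. 1 / lam - real i) = (\<Prod>i<k. lam * (1 / lam - real i))"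
    by (simp add: prod.distrib)
  also have "\<dots> = dfact lam k"
    using assms unfolding dfact_def by (intro prod.cong) (auto simp: field_simps)
  finally show ?thesis
    by (simp add: gbinomial_prod_rev atLeast0LessThan)
qed

lemma summable_dfact_moment:
  assumes r: "r \<ge> 0" and lr: "\<bar>lam\<bar> * r < 1"
  shows "summable (\<lambda>k. \<bar>dfact lam k\<bar> / fact k * real k ^ n * r ^ k)"
    (is "summable ?a")
proof -
  define c where "c = (1 + \<bar>lam\<bar> * r) / 2"
  have "c < 1" and lim_lt: "\<bar>lam\<bar> * r < c"
    using lr by (simp_all add: c_def field_simps)
  have lim: "(\<lambda>k. (1 + real k * L) / (real k + 1) * ((real k + 1) / real k) ^ n * r)
      \<longlonglongrightarrow> L * r" for L :: real
    by real_asymp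
  from order_tendstoD(2)[OF lim lim_lt] obtain N where N: "\<And>k. k \<ge> N \<Longrightarrow>
      (1 + real k * \<bar>lam\<bar>) / (real k + 1) * ((real k + 1) / real k) ^ n * r < c"
    unfolding eventually_sequentially by blast
  show ?thesis
  proof (rule summable_ratio_test[OF \<open>c < 1\<close>, of "max N 1"])
    fix k assume k: "k \<ge> max N 1"
    then have k0: "real k > 0" by simp
    define q where "q = ((real k + 1) / real k) ^ n"
    have "real (Suc k) ^ n = q * real k ^ n"
      using k0 by (simp add: q_def power_divide add.commute)
    then have "?a (Suc k)
        = \<bar>dfact lam k\<bar> * \<bar>1 - real k * lam\<bar> / (real (Suc k) * fact k) * (q * real k ^ n) * (r * r ^ k)"
      by (simp only: dfact_Suc abs_mult fact_Suc power_Suc)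
    also have "\<dots> = (\<bar>1 - real k * lam\<bar> / (real k + 1) * q * r) * ?a k"
      by (simp add: field_simps)
    finally have ratio: "?a (Suc k) = (\<bar>1 - real k * lam\<bar> / (real k + 1) * q * r) * ?a k" .
    have "\<bar>1 - real k * lam\<bar> \<le> 1 + real k * \<bar>lam\<bar>"
      by (metis abs_mult abs_of_nat abs_one abs_triangle_ineq4)
    then have "\<bar>1 - real k * lam\<bar> / (real k + 1) * q * r
        \<le> (1 + real k * \<bar>lam\<bar>) / (real k + 1) * q * r"
      using r k0 by (intro mult_right_mono divide_right_mono) (auto simp: q_def)
    also have "\<dots> \<le> c"
      using N[of k] k by (simp add: q_def)
    finally have "?a (Suc k) \<le> c * ?a k"
      unfolding ratio using r by (intro mult_right_mono) auto
    then show "norm (?a (Suc k)) \<le> c * norm (?a k)"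
      using r by simp
  qed
qed

definition dexp_term :: "real \<Rightarrow> real \<Rightarrow> nat \<Rightarrow> real" where
  "dexp_term lam x k = dfact lam k / fact k * x ^ k"

lemma dexp_term_Suc:
  "dexp_term lam x (Suc k) * real (Suc k) = x * (1 - real k * lam) * dexp_term lam x k"
proof -
  have "(fact (Suc k) :: real) = real (Suc k) * fact k"
    by simp
  then show ?thesis
    by (simp add: dexp_term_def dfact_Suc)
qed

lemma dexp_term_mult_exp:
  "dexp_term lam (x * exp t) k = dexp_term lam x k * exp (real k * t)"
  by (simp add: dexp_term_def power_mult_distrib exp_of_nat_mult)

lemma abs_dexp_term: "\<bar>dexp_term lam x k\<bar> = \<bar>dfact lam k\<bar> / fact k * \<bar>x\<bar> ^ k"
  by (simp add: dexp_term_def abs_mult power_abs)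

lemma dexp_sums:
  assumes "lam \<noteq> 0" and "\<bar>lam * x\<bar> < 1"
  shows "dexp_term lam x sums dexp lam x"
proof -
  have "dexp_term lam x = (\<lambda>k. (1 / lam gchoose k) * (lam * x) ^ k)"
    by (simp add: fun_eq_iff dexp_term_def dfact_eq_gbinomial[OF assms(1)] power_mult_distrib)
  then show ?thesis
    using gen_binomial_real[OF assms(2), of "1 / lam"] by (simp add: dexp_def)
qed

lemma summable_dexp_moment:
  assumes "\<bar>lam * x\<bar> < 1"
  shows "summable (\<lambda>k. dexp_term lam x k * real k ^ n)"
proof (rule summable_rabs_cancel)
  have "\<bar>dexp_term lam x k * real k ^ n\<bar> = \<bar>dfact lam k\<bar> / fact k * real k ^ n * \<bar>x\<bar> ^ k" for k
    by (simp add: abs_dexp_term abs_mult)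
  then show "summable (\<lambda>k. \<bar>dexp_term lam x k * real k ^ n\<bar>)"
    using summable_dfact_moment[of "\<bar>x\<bar>" lam n] assms by (simp add: abs_mult)
qed

definition dmoment :: "real \<Rightarrow> real \<Rightarrow> nat \<Rightarrow> real" where
  "dmoment lam x n = (\<Sum>k. dexp_term lam x k * real k ^ n)"

lemma dmoment_sums:
  "\<bar>lam * x\<bar> < 1 \<Longrightarrow> (\<lambda>k. dexp_term lam x k * real k ^ n) sums dmoment lam x n"
  unfolding dmoment_def by (rule summable_sums[OF summable_dexp_moment])

definition dexp_exp_deriv :: "real \<Rightarrow> real \<Rightarrow> nat \<Rightarrow> real \<Rightarrow> real" where
  "dexp_exp_deriv lam x n t = (\<Sum>k. dexp_term lam x k * real k ^ n * exp (real k * t))"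

lemma dexp_exp_deriv_0:
  assumes "lam \<noteq> 0" and "\<bar>lam * x * exp t\<bar> < 1"
  shows "dexp_exp_deriv lam x 0 t = dexp lam (x * exp t)"
proof -
  have "dexp_term lam (x * exp t) sums dexp lam (x * exp t)"
    using assms by (intro dexp_sums) (simp_all add: mult_ac)
  then show ?thesis
    by (simp add: dexp_exp_deriv_def dexp_term_mult_exp[symmetric] sums_iff)
qed

lemma norm_dexp_exp_term_le:
  assumes "t \<le> r"
  shows "norm (dexp_term lam x k * real k ^ n * exp (real k * t))
           \<le> \<bar>dfact lam k\<bar> / fact k * real k ^ n * (\<bar>x\<bar> * exp r) ^ k"
proof -
  have "exp (real k * t) \<le> exp r ^ k"
    using assms by (simp add: exp_of_nat_mult[symmetric] mult_left_mono)
  then have "\<bar>dfact lam k\<bar> / fact k * real k ^ n * (\<bar>x\<bar> ^ k * exp (real k * t))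
      \<le> \<bar>dfact lam k\<bar> / fact k * real k ^ n * (\<bar>x\<bar> ^ k * exp r ^ k)"
    by (intro mult_left_mono) auto
  then show ?thesis
    by (simp add: abs_dexp_term abs_mult power_mult_distrib mult_ac)
qed

lemma has_field_derivative_dexp_exp_deriv:
  assumes r: "\<bar>lam * x\<bar> * exp r < 1" and t: "t \<in> ball 0 r"
  shows "(dexp_exp_deriv lam x n has_field_derivative dexp_exp_deriv lam x (Suc n) t) (at t)"
proof -
  have bound: "summable (\<lambda>k. \<bar>dfact lam k\<bar> / fact k * real k ^ m * (\<bar>x\<bar> * exp r) ^ k)" for m
    using r by (intro summable_dfact_moment) (auto simp: abs_mult mult_ac)
  have le: "s \<le> r" if "s \<in> ball 0 r" for s
    using that by (simp add: dist_norm)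
  have "((\<lambda>t. \<Sum>k. dexp_term lam x k * real k ^ n * exp (real k * t)) has_field_derivative
         (\<Sum>k. dexp_term lam x k * real k ^ Suc n * exp (real k * t))) (at t)"
  proof (rule has_field_derivative_series'(2)[where S = "ball 0 r" and x0 = t])
    show "summable (\<lambda>k. dexp_term lam x k * real k ^ n * exp (real k * t))"
      using norm_dexp_exp_term_le[OF le[OF t]] by (rule summable_comparison_test'[OF bound])
    show "uniformly_convergent_on (ball 0 r)
            (\<lambda>m t. \<Sum>k<m. dexp_term lam x k * real k ^ Suc n * exp (real k * t))"
      using norm_dexp_exp_term_le[OF le] by (rule Weierstrass_m_test'[OF _ bound])
    show "((\<lambda>t. dexp_term lam x k * real k ^ n * exp (real k * t)) has_field_derivative
           dexp_term lam x k * real k ^ Suc n * exp (real k * s)) (at s within ball 0 r)" for k s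
      by (auto intro!: derivative_eq_intros)
  qed (use t in auto)
  then show ?thesis
    by (simp add: dexp_exp_deriv_def[abs_def])
qed

lemma bel_gf_eq_dexp: "bel_gf lam x t = dexp_inv lam x * dexp lam (x * exp t)"
proof -
  have "(1 + lam * x) powr (- 1 / lam) = 1 / (1 + lam * x) powr (1 / lam)"
    by (simp add: powr_minus_divide)
  then show ?thesis
    unfolding bel_gf_def dexp_def dexp_inv_def powr_divide by (simp add: mult_ac)
qed

lemma higher_deriv_bel_gf:
  assumes "lam \<noteq> 0" and r: "\<bar>lam * x\<bar> * exp r < 1" and "t \<in> ball 0 r"
  shows "(deriv ^^ n) (bel_gf lam x) t = dexp_inv lam x * dexp_exp_deriv lam x n t"
  using \<open>t \<in> ball 0 r\<close>
proof (induction n arbitrary: t)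
  case 0
  then have "exp t \<le> exp r"
    by simp
  then have "\<bar>lam * x\<bar> * exp t \<le> \<bar>lam * x\<bar> * exp r"
    by (intro mult_left_mono) auto
  then have "\<bar>lam * x * exp t\<bar> < 1"
    using r by (simp add: abs_mult)
  then show ?case
    using assms(1) by (simp add: bel_gf_eq_dexp dexp_exp_deriv_0)
next
  case (Suc n)
  have "((\<lambda>s. dexp_inv lam x * dexp_exp_deriv lam x n s) has_field_derivative
          dexp_inv lam x * dexp_exp_deriv lam x (Suc n) t) (at t)"
    by (intro DERIV_cmult has_field_derivative_dexp_exp_deriv[OF r Suc.prems])
  then have "((deriv ^^ n) (bel_gf lam x) has_field_derivative
          dexp_inv lam x * dexp_exp_deriv lam x (Suc n) t) (at t)"
    by (rule has_field_derivative_transform_within_open[OF _ _ Suc.prems]) (use Suc.IH in auto)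
  then show ?case
    by (simp add: DERIV_imp_deriv)
qed

lemma Bel_eq_dmoment:
  assumes "lam \<noteq> 0" and "\<bar>lam * x\<bar> < 1"
  shows "Bel n lam x = dexp_inv lam x * dmoment lam x n"
proof -
  define r where "r = ln (2 / (1 + \<bar>lam * x\<bar>))"
  have "r > 0"
    unfolding r_def using assms(2) by (subst ln_gt_zero_iff) (auto simp: field_simps)
  have "exp r = 2 / (1 + \<bar>lam * x\<bar>)"
    unfolding r_def by (intro exp_ln) (simp add: add_pos_nonneg)
  then have "\<bar>lam * x\<bar> * exp r = \<bar>lam * x\<bar> * 2 / (1 + \<bar>lam * x\<bar>)"
    by simp
  also have "\<dots> < 1"
    using assms(2) by (simp add: field_simps)
  finally have "\<bar>lam * x\<bar> * exp r < 1" .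
  then show ?thesis
    using higher_deriv_bel_gf[OF assms(1), of x r 0 n] \<open>r > 0\<close>
    by (simp add: Bel_def dexp_exp_deriv_def dmoment_def)
qed

lemma dmoment_binomial_sums:
  assumes "\<bar>lam * x\<bar> < 1"
  shows "(\<lambda>k. dexp_term lam x k * real k ^ m * (real k + 1) ^ q)
           sums (\<Sum>l\<le>q. of_nat (q choose l) * dmoment lam x (l + m))"
proof -
  have "(\<lambda>k. \<Sum>l\<le>q. of_nat (q choose l) * (dexp_term lam x k * real k ^ (l + m)))
          sums (\<Sum>l\<le>q. of_nat (q choose l) * dmoment lam x (l + m))"
    by (intro sums_sum sums_mult dmoment_sums assms)
  moreover have "(\<Sum>l\<le>q. of_nat (q choose l) * (dexp_term lam x k * real k ^ (l + m)))
      = dexp_term lam x k * real k ^ m * (real k + 1) ^ q" for k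
    by (simp add: binomial_ring sum_distrib_left power_add mult_ac)
  ultimately show ?thesis
    by simp
qed

lemma dexp_poly_sums:
  assumes "\<bar>lam * x\<bar> < 1"
  shows "(\<lambda>k. dexp_term lam x k * (real k + 1) ^ q) sums dexp_poly lam q x"
proof -
  have "summable (\<lambda>k. dexp_term lam x k * (real k + 1) ^ q)"
    using dmoment_binomial_sums[OF assms, of 0 q] by (simp add: sums_iff)
  moreover have "dexp_poly lam q x = (\<Sum>k. dexp_term lam x k * (real k + 1) ^ q)"
    by (simp add: dexp_poly_def dexp_term_def mult_ac)
  ultimately show ?thesis
    by (simp add: summable_sums)
qed

lemma dmoment_recurrence:
  assumes "\<bar>lam * x\<bar> < 1"
  shows "x * dexp_poly lam q x
           = dmoment lam x (q + 1) + lam * x * (\<Sum>l\<le>q. of_nat (q choose l) * dmoment lam x (l + 1))"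
proof -
  have shifted: "(\<lambda>k. dexp_term lam x (Suc k) * real (Suc k) ^ (q + 1)) sums dmoment lam x (q + 1)"
    using dmoment_sums[OF assms, of "q + 1"] by (subst sums_Suc_iff) simp
  have weighted: "(\<lambda>k. dexp_term lam x k * real k * (real k + 1) ^ q)
      sums (\<Sum>l\<le>q. of_nat (q choose l) * dmoment lam x (l + 1))"
    using dmoment_binomial_sums[OF assms, of 1 q] by simp
  have split: "x * (dexp_term lam x k * (real k + 1) ^ q)
      = dexp_term lam x (Suc k) * real (Suc k) ^ (q + 1)
        + lam * x * (dexp_term lam x k * real k * (real k + 1) ^ q)" for k
  proof -
    have "dexp_term lam x (Suc k) * real (Suc k) ^ (q + 1)
        = x * (1 - real k * lam) * dexp_term lam x k * (real k + 1) ^ q"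
      using dexp_term_Suc[of lam x k] by (simp add: add.commute mult_ac)
    then show ?thesis
      by (simp add: algebra_simps)
  qed
  have "(\<lambda>k. x * (dexp_term lam x k * (real k + 1) ^ q)) sums (x * dexp_poly lam q x)"
    by (intro sums_mult dexp_poly_sums assms)
  moreover have "(\<lambda>k. x * (dexp_term lam x k * (real k + 1) ^ q))
      sums (dmoment lam x (q + 1) + lam * x * (\<Sum>l\<le>q. of_nat (q choose l) * dmoment lam x (l + 1)))"
    unfolding split by (intro sums_add sums_mult shifted weighted)
  ultimately show ?thesis
    by (rule sums_unique2)
qed

theorem mainTheorem14:
  fixes lam x :: real and p :: nat
  assumes "lam \<noteq> 0" and "\<bar>lam * x\<bar> < 1" and "p \<ge> 2"
  shows "Bel p lam x =
           x * dexp_inv lam x / (1 + lam * x) * dexp_poly lam (p - 1) x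
           - lam * x / (1 + lam * x) * (\<Sum>l = 0..p - 2. of_nat ((p - 1) choose l) * Bel (l + 1) lam x)"
proof -
  obtain m where p: "p = m + 2"
    using assms(3) by (metis add.commute le_Suc_ex)
  define E where "E = dexp_inv lam x"
  define B where "B = (\<Sum>l\<le>m. of_nat ((m + 1) choose l) * dmoment lam x (l + 1))"
  have "1 + lam * x > 0"
    using assms(2) by linarith
  have xP: "x * dexp_poly lam (m + 1) x = (1 + lam * x) * dmoment lam x (m + 2) + lam * x * B"
    using dmoment_recurrence[OF assms(2), of "m + 1"] by (simp add: B_def algebra_simps)
  have sum_Bel: "(\<Sum>l = 0..p - 2. of_nat ((p - 1) choose l) * Bel (l + 1) lam x) = E * B"
    by (simp add: p B_def E_def Bel_eq_dmoment[OF assms(1,2)] atLeast0AtMost sum_distrib_left mult_ac)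
  have "Bel p lam x = E * dmoment lam x (m + 2)"
    by (simp add: p E_def Bel_eq_dmoment[OF assms(1,2)])
  also have "\<dots> = E * ((x * dexp_poly lam (m + 1) x - lam * x * B) / (1 + lam * x))"
    using \<open>1 + lam * x > 0\<close> xP by simp
  also have "\<dots> = x * E / (1 + lam * x) * dexp_poly lam (p - 1) x - lam * x / (1 + lam * x) * (E * B)"
    by (simp add: p diff_divide_distrib algebra_simps)
  finally show ?thesis
    unfolding sum_Bel E_def .
qed

end
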